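(* Let $B\subset\mathbb R^d$ be a convex body and let $C_1\cup\dots\cup C_k=B$ be a hierarchical affine partition of $B$ with all $C_i$ nonempty. Then $\sum_{i=1}^k r_B(C_i)\ge 1$. In particular this holds for binary partitions of $B$ by hyperplanes (where repeatedly one current part is cut into two by a hyperplane).
   Context: A convex body is a compact convex set with nonempty interior. For affine functions $\lambda_1,\dots,\lambda_k$ on $\mathbb R^d$, the affine partition of a set $X\subseteq\mathbb R^d$ they determine consists of the sets $X\cap\{x:\lambda_i(x)\le\lambda_j(x)\ \forall j\ne i\}$. Hierarchical affine partitions of $B$ are defined recursively: every affine partition of $B$ is hierarchical; replacing a part $C_i$ of a hierarchical affine partition by the parts of an affine partition of $C_i$ gives again a hierarchical affine partition. For a convex body $B$ and a convex set $C$, $r_B(C)=\sup\{h\ge 0:\exists t\in\mathbb R^d,\ hB+t\subseteq C\}$, with $r_B(\emptyset)=-\infty$. *)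

theory Defs
  imports "HOL-Analysis.Analysis" "HOL-Library.Extended_Real"
begin

definition convex_body :: "'a::euclidean_space set \<Rightarrow> bool" where
  "convex_body B \<longleftrightarrow> compact B \<and> convex B \<and> interior B \<noteq> {}"

definition aff_eval :: "'a::euclidean_space \<times> real \<Rightarrow> 'a \<Rightarrow> real" where
  "aff_eval l x = fst l \<bullet> x + snd l"

definition affine_partition :: "'a::euclidean_space set \<Rightarrow> ('a \<times> real) list \<Rightarrow> 'a set list" where
  "affine_partition X ls =
     map (\<lambda>i. X \<inter> {x. \<forall>j<length ls. j \<noteq> i \<longrightarrow> aff_eval (ls ! i) x \<le> aff_eval (ls ! j) x})
         [0..<length ls]"

inductive hier_affine_partition :: "'a::euclidean_space set \<Rightarrow> 'a set list \<Rightarrow> bool"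
  for B :: "'a set" where
  base: "ls \<noteq> [] \<Longrightarrow> hier_affine_partition B (affine_partition B ls)"
| refine: "hier_affine_partition B P \<Longrightarrow> i < length P \<Longrightarrow> ls \<noteq> [] \<Longrightarrow>
     hier_affine_partition B (take i P @ affine_partition (P ! i) ls @ drop (Suc i) P)"

definition inradius_rel :: "'a::euclidean_space set \<Rightarrow> 'a set \<Rightarrow> ereal" where
  "inradius_rel B C = (if C = {} then -\<infinity>
     else Sup (ereal ` {h. h \<ge> 0 \<and> (\<exists>t. (\<lambda>x. h *\<^sub>R x + t) ` B \<subseteq> C)}))"

end

theory Submission
  imports Defs
begin

text \<open>
  By induction along the construction of a hierarchical affine partition it
  suffices to show the one-cut inequality: if a set \<open>C\<close> is cut by an affine partition into
  nonempty parts \<open>D\<^sub>i\<close>, then \<open>r\<^sub>B(C) \<le> \<Sum> r\<^sub>B(D\<^sub>i)\<close>; the base case starts from \<open>r\<^sub>B(B) \<ge> 1\<close>.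
  For the one-cut inequality take a homothet \<open>K = h B + t \<subseteq> C\<close> and its cells for the affine
  functions that are minimal somewhere on \<open>K\<close>.  If their inradii summed to less than \<open>h\<close>,
  choose shares \<open>s\<^sub>i\<close> with \<open>\<Sum> s\<^sub>i = 1\<close> and \<open>s\<^sub>i h > r\<^sub>B(cell i)\<close>.  Then no shrunk copy
  \<open>s\<^sub>i K + (1 - s\<^sub>i) p\<close> fits into cell \<open>i\<close>, which, by a theorem of the alternative for affine
  functions, yields a stochastic matrix \<open>W\<close> making certain affine functions positive on \<open>K\<close>.
  Reading the values of the affine functions as potentials of the Markov chain \<open>W\<close>, a bound
  on stationary averages (proved by censoring states one at a time) gives a contradiction.
\<close>

definition stochastic_on :: "'i set \<Rightarrow> ('i \<Rightarrow> 'i \<Rightarrow> real) \<Rightarrow> bool" where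
  "stochastic_on S W \<longleftrightarrow> (\<forall>l\<in>S. \<forall>j\<in>S. W l j \<ge> 0) \<and> (\<forall>l\<in>S. sum (W l) S = 1)"

definition stationary_on :: "'i set \<Rightarrow> ('i \<Rightarrow> 'i \<Rightarrow> real) \<Rightarrow> ('i \<Rightarrow> real) \<Rightarrow> bool" where
  "stationary_on S W p \<longleftrightarrow> (\<forall>l\<in>S. p l \<ge> 0) \<and> (\<forall>j\<in>S. (\<Sum>l\<in>S. p l * W l j) = p j)"

lemma stochastic_entry_le_1:
  assumes "stochastic_on S W" "finite S" "l \<in> S" "j \<in> S"
  shows "W l j \<le> 1"
proof -
  have "W l j \<le> sum (W l) S"
    by (rule member_le_sum) (use assms in \<open>auto simp: stochastic_on_def\<close>)
  then show ?thesis using assms by (auto simp: stochastic_on_def)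
qed

lemma stochastic_absorbing:
  assumes st: "stochastic_on S W" and fin: "finite S" and l: "l \<in> S" and Wll: "W l l \<ge> 1"
    and j: "j \<in> S" "j \<noteq> l"
  shows "W l j = 0"
proof -
  have nonneg: "\<forall>x\<in>S - {l}. 0 \<le> W l x" using st l unfolding stochastic_on_def by blast
  have "W l l \<le> 1" using stochastic_entry_le_1[OF st fin l l] .
  moreover have "sum (W l) S = 1" using st l unfolding stochastic_on_def by blast
  moreover have "sum (W l) S = W l l + sum (W l) (S - {l})" using fin l by (rule sum.remove)
  ultimately have "sum (W l) (S - {l}) = 0" using Wll by linarith
  then have "\<forall>x\<in>S - {l}. W l x = 0"
    using sum_nonneg_eq_0_iff[of "S - {l}" "W l"] fin nonneg by simp
  then show ?thesis using j by simp
qed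

text \<open>The chain censored at a transient state \<open>m\<close>: excursions through \<open>m\<close> are short-cut.
  This is the stochastic complement used to eliminate states one at a time.\<close>

definition censored :: "'i \<Rightarrow> ('i \<Rightarrow> 'i \<Rightarrow> real) \<Rightarrow> 'i \<Rightarrow> 'i \<Rightarrow> real" where
  "censored m W = (\<lambda>l j. W l j + W l m * W m j / (1 - W m m))"

lemma stochastic_censored:
  assumes st: "stochastic_on S W" and fin: "finite S" and m: "m \<in> S" and Wmm: "W m m < 1"
  shows "stochastic_on (S - {m}) (censored m W)"
proof -
  let ?d = "1 - W m m"
  have dpos: "?d > 0" using Wmm by auto
  have "censored m W l j \<ge> 0" if "l \<in> S - {m}" "j \<in> S - {m}" for l j
    using st that m dpos unfolding stochastic_on_def censored_def
    by (auto intro!: add_nonneg_nonneg divide_nonneg_pos)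
  moreover have "sum (censored m W l) (S - {m}) = 1" if l: "l \<in> S - {m}" for l
  proof -
    have row_l: "sum (W l) (S - {m}) = 1 - W l m"
      using st l sum.remove[OF fin m, of "W l"] unfolding stochastic_on_def by auto
    have row_m: "sum (W m) (S - {m}) = ?d"
      using st m sum.remove[OF fin m, of "W m"] unfolding stochastic_on_def by auto
    have "sum (censored m W l) (S - {m}) = sum (W l) (S - {m}) + W l m / ?d * sum (W m) (S - {m})"
      unfolding censored_def by (simp add: sum.distrib sum_distrib_left)
    also have "\<dots> = 1" using row_l row_m dpos by simp
    finally show ?thesis .
  qed
  ultimately show ?thesis unfolding stochastic_on_def by auto
qed

lemma censored_left_mult:
  shows "(\<Sum>l\<in>S. p l * censored m W l j)
    = (\<Sum>l\<in>S. p l * W l j) + (\<Sum>l\<in>S. p l * W l m) * (W m j / (1 - W m m))"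
proof -
  have "(\<Sum>l\<in>S. p l * censored m W l j)
      = (\<Sum>l\<in>S. p l * W l j + (p l * W l m) * (W m j / (1 - W m m)))"
    by (rule sum.cong) (simp_all add: censored_def algebra_simps)
  then show ?thesis by (simp only: sum.distrib sum_distrib_right)
qed

lemma stationary_inflow:
  assumes "stationary_on S W p" "finite S" "m \<in> S"
  shows "(\<Sum>l\<in>S - {m}. p l * W l m) = p m * (1 - W m m)"
proof -
  have "p m = p m * W m m + (\<Sum>l\<in>S - {m}. p l * W l m)"
    using assms sum.remove[OF assms(2,3), of "\<lambda>l. p l * W l m"]
    by (simp add: stationary_on_def)
  then show ?thesis by (simp add: algebra_simps)
qed

lemma stationary_censored:
  assumes sp: "stationary_on S W p" and fin: "finite S" and m: "m \<in> S" and Wmm: "W m m < 1"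
  shows "stationary_on (S - {m}) (censored m W) p"
proof -
  have "(\<Sum>l\<in>S - {m}. p l * censored m W l j) = p j" if j: "j \<in> S - {m}" for j
  proof -
    have "(\<Sum>l\<in>S - {m}. p l * censored m W l j) = (\<Sum>l\<in>S - {m}. p l * W l j) + p m * W m j"
      using censored_left_mult[where S = "S - {m}" and p = p] stationary_inflow[OF sp fin m] Wmm by simp
    also have "\<dots> = p j"
      using sp j sum.remove[OF fin m, of "\<lambda>l. p l * W l j"] by (simp add: stationary_on_def)
    finally show ?thesis .
  qed
  then show ?thesis using sp by (simp add: stationary_on_def)
qed

lemma stationary_uncensored:
  assumes st: "stochastic_on S W" and fin: "finite S" and m: "m \<in> S" and Wmm: "W m m < 1"
    and sq: "stationary_on (S - {m}) (censored m W) q"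
  shows "stationary_on S W (q(m := (\<Sum>l\<in>S - {m}. q l * W l m) / (1 - W m m)))"
proof -
  let ?d = "1 - W m m"
  define pm where "pm = (\<Sum>l\<in>S - {m}. q l * W l m) / ?d"
  have dpos: "?d > 0" using Wmm by simp
  have inflow: "(\<Sum>l\<in>S - {m}. q l * W l m) = pm * ?d" using dpos by (simp add: pm_def)
  have sum_split: "(\<Sum>l\<in>S. (q(m := pm)) l * W l j) = (\<Sum>l\<in>S - {m}. q l * W l j) + pm * W m j"
    for j using fin m by (simp add: sum.remove add.commute)
  have "0 \<le> (\<Sum>l\<in>S - {m}. q l * W l m)" using sq st m
    unfolding stationary_on_def stochastic_on_def by (intro sum_nonneg mult_nonneg_nonneg) auto
  then have nonneg: "0 \<le> (q(m := pm)) l" if "l \<in> S" for l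
    using sq that dpos by (auto simp: stationary_on_def pm_def)
  have balance: "(\<Sum>l\<in>S. (q(m := pm)) l * W l j) = (q(m := pm)) j" if j: "j \<in> S" for j
  proof (cases "j = m")
    case True
    then show ?thesis using sum_split[of m] inflow by (simp add: algebra_simps)
  next
    case False
    have "q j = (\<Sum>l\<in>S - {m}. q l * censored m W l j)"
      using sq j False unfolding stationary_on_def by auto
    also have "\<dots> = (\<Sum>l\<in>S - {m}. q l * W l j) + pm * W m j"
      using censored_left_mult[where S = "S - {m}" and p = q] inflow dpos by simp
    finally show ?thesis using sum_split[of j] False by simp
  qed
  have "stationary_on S W (q(m := pm))" unfolding stationary_on_def using nonneg balance by blast
  then show ?thesis by (simp only: pm_def)
qed

text \<open>Every finite stochastic matrix has a nonzero stationary vector; proof by censoring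
  states until an absorbing state or a single state is left.\<close>

lemma stationary_exists:
  assumes "finite S" "S \<noteq> {}" "stochastic_on S W"
  shows "\<exists>p. stationary_on S W p \<and> (\<exists>i\<in>S. p i > 0)"
  using assms
proof (induction "card S" arbitrary: S W rule: less_induct)
  case less
  note fin = less.prems(1) and st = less.prems(3)
  obtain m where m: "m \<in> S" using less.prems(2) by auto
  show ?case
  proof (cases "W m m < 1")
    case False
    define p where "p = (\<lambda>l. if l = m then 1 else 0::real)"
    have "(\<Sum>l\<in>S. p l * W l j) = p j" if j: "j \<in> S" for j
    proof -
      have "(\<Sum>l\<in>S. p l * W l j) = (\<Sum>l\<in>S. if l = m then W m j else 0)"
        by (rule sum.cong) (auto simp: p_def)
      also have "\<dots> = W m j" using fin m by simp
      also have "\<dots> = p j"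
        using stochastic_absorbing[OF st fin m _ j] False stochastic_entry_le_1[OF st fin m m]
        unfolding p_def by auto
      finally show ?thesis .
    qed
    then have "stationary_on S W p" by (simp add: stationary_on_def p_def)
    then show ?thesis using m by (auto simp: p_def)
  next
    case True
    have "S - {m} \<noteq> {}"
    proof
      assume "S - {m} = {}"
      then have "S = {m}" using m by auto
      then show False using st True unfolding stochastic_on_def by auto
    qed
    moreover have "card (S - {m}) < card S" using m fin by (meson card_Diff1_less)
    ultimately obtain q i where q: "stationary_on (S - {m}) (censored m W) q"
      and i: "i \<in> S - {m}" "q i > 0"
      using less.hyps stochastic_censored[OF st fin m True] fin by blast
    then show ?thesis using stationary_uncensored[OF st fin m True q] by (intro exI bexI) auto
  qed
qed

definition drift_bounded ::
    "'i set \<Rightarrow> ('i \<Rightarrow> 'i \<Rightarrow> real) \<Rightarrow> ('i \<Rightarrow> real) \<Rightarrow> ('i \<Rightarrow> real) set \<Rightarrow> bool" where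
  "drift_bounded S W \<alpha> V \<longleftrightarrow> (\<forall>v\<in>V. \<forall>l\<in>S. (\<Sum>j\<in>S. W l j * (v j - v l)) \<le> \<alpha> l)"

lemma detour_drift:
  assumes st: "stochastic_on S W" and fin: "finite S" and m: "m \<in> S" and Wmm: "W m m < 1"
    and dr: "drift_bounded S W \<alpha> V" and v: "v \<in> V" and l: "l \<in> S"
  shows "W l m / (1 - W m m) * (\<Sum>j\<in>S - {m}. W m j * (v j - v l))
    \<le> W l m * \<alpha> m / (1 - W m m) + W l m * (v m - v l)"
proof -
  let ?S = "S - {m}" and ?d = "1 - W m m"
  have dpos: "?d > 0" using Wmm by simp
  have row_m: "(\<Sum>j\<in>?S. W m j) = ?d"
    using st m sum.remove[OF fin m, of "W m"] by (simp add: stochastic_on_def)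
  have "(\<Sum>j\<in>?S. W m j * (v j - v m)) + W m m * (v m - v m) = (\<Sum>j\<in>S. W m j * (v j - v m))"
    using sum.remove[OF fin m, of "\<lambda>j. W m j * (v j - v m)"] by simp
  also have "\<dots> \<le> \<alpha> m" using dr m v by (simp add: drift_bounded_def)
  finally have drift_m: "(\<Sum>j\<in>?S. W m j * (v j - v m)) \<le> \<alpha> m" by simp
  have "(\<Sum>j\<in>?S. W m j * (v j - v l)) = (\<Sum>j\<in>?S. W m j * (v j - v m) + W m j * (v m - v l))"
    by (rule sum.cong) (auto simp: algebra_simps)
  also have "\<dots> = (\<Sum>j\<in>?S. W m j * (v j - v m)) + ?d * (v m - v l)"
    by (simp add: sum.distrib sum_distrib_right[symmetric] row_m)
  finally have "(\<Sum>j\<in>?S. W m j * (v j - v l)) \<le> \<alpha> m + ?d * (v m - v l)"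
    using drift_m by simp
  then have "W l m / ?d * (\<Sum>j\<in>?S. W m j * (v j - v l)) \<le> W l m / ?d * (\<alpha> m + ?d * (v m - v l))"
    using st l m dpos by (intro mult_left_mono) (auto simp: stochastic_on_def)
  also have "\<dots> = W l m * \<alpha> m / ?d + W l m * (v m - v l)" using dpos by (simp add: field_simps)
  finally show ?thesis .
qed

text \<open>Censoring a state \<open>m\<close> keeps the drift bounded, once the drift of \<open>m\<close> is charged to the
  states that jump into \<open>m\<close>.\<close>

lemma drift_bounded_censored:
  assumes st: "stochastic_on S W" and fin: "finite S" and m: "m \<in> S" and Wmm: "W m m < 1"
    and dr: "drift_bounded S W \<alpha> V"
  shows "drift_bounded (S - {m}) (censored m W) (\<lambda>l. \<alpha> l + W l m * \<alpha> m / (1 - W m m)) V"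
  unfolding drift_bounded_def
proof (intro ballI)
  fix v l assume v: "v \<in> V" and l: "l \<in> S - {m}"
  let ?S = "S - {m}" and ?d = "1 - W m m"
  have "(\<Sum>j\<in>?S. censored m W l j * (v j - v l))
      = (\<Sum>j\<in>?S. W l j * (v j - v l) + W l m / ?d * (W m j * (v j - v l)))"
    by (rule sum.cong) (simp_all add: censored_def algebra_simps add_divide_distrib[symmetric])
  also have "\<dots> = (\<Sum>j\<in>?S. W l j * (v j - v l)) + W l m / ?d * (\<Sum>j\<in>?S. W m j * (v j - v l))"
    by (simp only: sum.distrib sum_distrib_left)
  also have "\<dots> \<le> (\<Sum>j\<in>?S. W l j * (v j - v l)) + W l m * (v m - v l) + W l m * \<alpha> m / ?d"
    using detour_drift[OF st fin m Wmm dr v] l by (simp add: add.commute)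
  also have "(\<Sum>j\<in>?S. W l j * (v j - v l)) + W l m * (v m - v l) = (\<Sum>j\<in>S. W l j * (v j - v l))"
    using sum.remove[OF fin m, of "\<lambda>j. W l j * (v j - v l)"] by simp
  also have "\<dots> \<le> \<alpha> l" using dr v l by (simp add: drift_bounded_def)
  finally show "(\<Sum>j\<in>?S. censored m W l j * (v j - v l)) \<le> \<alpha> l + W l m * \<alpha> m / ?d"
    by simp
qed

lemma stationary_average_censored:
  assumes sp: "stationary_on S W p" and fin: "finite S" and m: "m \<in> S" and Wmm: "W m m < 1"
  shows "(\<Sum>l\<in>S - {m}. p l * (\<alpha> l + W l m * \<alpha> m / (1 - W m m))) = (\<Sum>l\<in>S. p l * \<alpha> l)"
proof -
  let ?d = "1 - W m m"
  have "(\<Sum>l\<in>S - {m}. p l * (\<alpha> l + W l m * \<alpha> m / ?d))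
      = (\<Sum>l\<in>S - {m}. p l * \<alpha> l + (p l * W l m) * (\<alpha> m / ?d))"
    by (rule sum.cong) (simp_all add: algebra_simps)
  also have "\<dots> = (\<Sum>l\<in>S - {m}. p l * \<alpha> l) + (\<Sum>l\<in>S - {m}. p l * W l m) * (\<alpha> m / ?d)"
    by (simp only: sum.distrib sum_distrib_right)
  also have "\<dots> = (\<Sum>l\<in>S - {m}. p l * \<alpha> l) + p m * \<alpha> m"
    using stationary_inflow[OF sp fin m] Wmm by simp
  also have "\<dots> = (\<Sum>l\<in>S. p l * \<alpha> l)"
    using sum.remove[OF fin m, of "\<lambda>l. p l * \<alpha> l"] by simp
  finally show ?thesis .
qed

text \<open>The potential gain from \<open>i\<close> does not decrease under censoring of \<open>m \<noteq> i\<close>, provided the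
  potential used after a detour through \<open>m\<close> is the better of the two available ones.\<close>

lemma gain_censored:
  assumes st: "stochastic_on S W" and fin: "finite S" and m: "m \<in> S" and Wmm: "W m m < 1"
    and i: "i \<in> S" "i \<noteq> m" and dr: "drift_bounded S W \<alpha> V" and um: "u m \<in> V"
  defines "u' \<equiv> \<lambda>j. if u m i - u m j \<le> u j i - u j j then u j else u m"
  shows "\<alpha> i + (\<Sum>j\<in>S. W i j * (u j i - u j j))
    \<le> \<alpha> i + W i m * \<alpha> m / (1 - W m m) + (\<Sum>j\<in>S - {m}. censored m W i j * (u' j i - u' j j))"
proof -
  let ?S = "S - {m}" and ?d = "1 - W m m"
  have dpos: "?d > 0" using Wmm by simp
  have Wim: "W i m \<ge> 0" using st i m by (simp add: stochastic_on_def)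
  have better: "u' j i - u' j j = max (u j i - u j j) (u m i - u m j)" for j
    by (auto simp: u'_def)
  have termwise: "W i j * (u j i - u j j) + W i m / ?d * (W m j * (u m i - u m j))
      \<le> censored m W i j * (u' j i - u' j j)" if j: "j \<in> ?S" for j
  proof -
    have a: "W i j \<ge> 0" and c: "W i m / ?d * W m j \<ge> 0"
      using st j i m Wim dpos by (auto simp: stochastic_on_def)
    have "W i j * (u j i - u j j) \<le> W i j * (u' j i - u' j j)"
      using mult_left_mono[OF _ a] better by simp
    moreover have "W i m / ?d * W m j * (u m i - u m j) \<le> W i m / ?d * W m j * (u' j i - u' j j)"
      using mult_left_mono[OF _ c, of "u m i - u m j" "u' j i - u' j j"] better by simp
    moreover have "censored m W i j = W i j + W i m / ?d * W m j" by (simp add: censored_def)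
    ultimately show ?thesis by (simp only: distrib_right mult.assoc[symmetric])
  qed
  have "(\<Sum>j\<in>?S. W m j * (u m j - u m i)) = - (\<Sum>j\<in>?S. W m j * (u m i - u m j))"
    by (simp add: sum_negf[symmetric] algebra_simps)
  then have "W i m * (u m i - u m m)
      \<le> W i m * \<alpha> m / ?d + W i m / ?d * (\<Sum>j\<in>?S. W m j * (u m i - u m j))"
    using detour_drift[OF st fin m Wmm dr um i(1)] by (simp add: algebra_simps)
  moreover have "(\<Sum>j\<in>?S. W i j * (u j i - u j j)) + W i m / ?d * (\<Sum>j\<in>?S. W m j * (u m i - u m j))
      \<le> (\<Sum>j\<in>?S. censored m W i j * (u' j i - u' j j))"
    using sum_mono[OF termwise] by (simp only: sum.distrib sum_distrib_left)
  moreover have "(\<Sum>j\<in>S. W i j * (u j i - u j j))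
      = W i m * (u m i - u m m) + (\<Sum>j\<in>?S. W i j * (u j i - u j j))"
    using sum.remove[OF fin m, of "\<lambda>j. W i j * (u j i - u j j)"] by simp
  ultimately show ?thesis by simp
qed

text \<open>If every state other than \<open>i\<close> is absorbing, stationary mass at \<open>i\<close> forces \<open>i\<close> to be
  absorbing too, and the bound below is immediate.\<close>

lemma stationary_gain_bound_absorbing:
  assumes st: "stochastic_on S W" and fin: "finite S" and sp: "stationary_on S W p"
    and \<alpha>: "\<forall>l\<in>S. \<alpha> l \<ge> 0" and i: "i \<in> S" and absorbing: "\<forall>m\<in>S - {i}. W m m \<ge> 1"
  shows "p i * (\<alpha> i + (\<Sum>j\<in>S. W i j * (u j i - u j j))) \<le> (\<Sum>l\<in>S. p l * \<alpha> l)"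
proof -
  have p: "\<forall>l\<in>S. p l \<ge> 0" using sp by (simp add: stationary_on_def)
  have total: "0 \<le> (\<Sum>l\<in>S. p l * \<alpha> l)" using p \<alpha> by (auto intro!: sum_nonneg)
  have "W l i = 0" if "l \<in> S - {i}" for l
    using stochastic_absorbing[OF st fin _ _ i] absorbing that by auto
  then have "(\<Sum>l\<in>S - {i}. p l * W l i) = 0" by simp
  moreover have "p i = (\<Sum>l\<in>S. p l * W l i)" using sp i by (simp add: stationary_on_def)
  ultimately have p_fixed: "p i = p i * W i i" using sum.remove[OF fin i, of "\<lambda>l. p l * W l i"] by simp
  show ?thesis
  proof (cases "W i i < 1")
    case True
    then have "p i = 0" using p_fixed by (metis mult.right_neutral mult_left_cancel less_irrefl)
    then show ?thesis using total by simp
  next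
    case False
    have "\<forall>j\<in>S. W i j * (u j i - u j j) = 0"
      using stochastic_absorbing[OF st fin i] False by force
    then have "(\<Sum>j\<in>S. W i j * (u j i - u j j)) = 0" by (rule sum.neutral)
    moreover have "p i * \<alpha> i \<le> (\<Sum>l\<in>S. p l * \<alpha> l)"
      by (rule member_le_sum) (use i p \<alpha> fin in auto)
    ultimately show ?thesis by simp
  qed
qed

text \<open>Proof by censoring all other transient states.\<close>

lemma stationary_gain_bound:
  assumes "finite S" "stochastic_on S W" "stationary_on S W p" "\<forall>l\<in>S. \<alpha> l \<ge> 0"
    "drift_bounded S W \<alpha> V" "i \<in> S" "\<forall>j\<in>S. u j \<in> V"
  shows "p i * (\<alpha> i + (\<Sum>j\<in>S. W i j * (u j i - u j j))) \<le> (\<Sum>l\<in>S. p l * \<alpha> l)"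
  using assms
proof (induction "card S" arbitrary: S W \<alpha> u rule: less_induct)
  case less
  note fin = less.prems(1) and st = less.prems(2) and sp = less.prems(3) and \<alpha> = less.prems(4)
    and dr = less.prems(5) and i = less.prems(6) and u = less.prems(7)
  show ?case
  proof (cases "\<exists>m\<in>S - {i}. W m m < 1")
    case False
    then show ?thesis using stationary_gain_bound_absorbing[OF st fin sp \<alpha> i] by (simp add: not_less)
  next
    case True
    then obtain m where m: "m \<in> S" "m \<noteq> i" and Wmm: "W m m < 1" by auto
    let ?S = "S - {m}" and ?\<alpha> = "\<lambda>l. \<alpha> l + W l m * \<alpha> m / (1 - W m m)"
    define u' where "u' = (\<lambda>j. if u m i - u m j \<le> u j i - u j j then u j else u m)"
    have "?\<alpha> l \<ge> 0" if "l \<in> ?S" for l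
      using \<alpha> st m(1) Wmm that unfolding stochastic_on_def
      by (intro add_nonneg_nonneg divide_nonneg_pos mult_nonneg_nonneg) auto
    moreover have "card ?S < card S" using fin m by (meson card_Diff1_less)
    moreover have "\<forall>j\<in>?S. u' j \<in> V" using u m by (simp add: u'_def)
    moreover have "i \<in> ?S" using i m by simp
    ultimately have "p i * (?\<alpha> i + (\<Sum>j\<in>?S. censored m W i j * (u' j i - u' j j)))
        \<le> (\<Sum>l\<in>?S. p l * ?\<alpha> l)"
      using less.hyps[OF _ finite_Diff[OF fin] stochastic_censored[OF st fin m(1) Wmm]
        stationary_censored[OF sp fin m(1) Wmm] _ drift_bounded_censored[OF st fin m(1) Wmm dr]]
      by blast
    moreover have "p i * (\<alpha> i + (\<Sum>j\<in>S. W i j * (u j i - u j j)))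
        \<le> p i * (?\<alpha> i + (\<Sum>j\<in>?S. censored m W i j * (u' j i - u' j j)))"
      using gain_censored[OF st fin m(1) Wmm i m(2)[symmetric] dr] u m(1) sp i
      unfolding u'_def stationary_on_def by (intro mult_left_mono) (auto simp: add.assoc)
    ultimately show ?thesis
      using stationary_average_censored[OF sp fin m(1) Wmm] by simp
  qed
qed

text \<open>Consequently no stochastic matrix admits shares \<open>s\<close> summing to one that every state's gain
  strictly beats: averaging the strict inequalities with the stationary vector gives \<open>X < X\<close>.\<close>

lemma no_shares_beaten_by_gains:
  assumes fin: "finite S" "S \<noteq> {}" and st: "stochastic_on S W" and dr: "drift_bounded S W \<alpha> V"
    and \<alpha>: "\<forall>l\<in>S. \<alpha> l \<ge> 0" and s: "\<forall>i\<in>S. s i \<ge> 0" "sum s S = 1"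
    and u: "\<forall>i\<in>S. \<forall>j\<in>S. u i j \<in> V"
    and beaten: "\<forall>i\<in>S. \<alpha> i < s i * (\<alpha> i + (\<Sum>j\<in>S. W i j * (u i j i - u i j j)))"
  shows False
proof -
  obtain \<pi> i0 where \<pi>: "stationary_on S W \<pi>" and i0: "i0 \<in> S" "\<pi> i0 > 0"
    using stationary_exists[OF fin st] by auto
  have \<pi>_nonneg: "\<forall>l\<in>S. \<pi> l \<ge> 0" using \<pi> by (simp add: stationary_on_def)
  define X where "X = (\<Sum>l\<in>S. \<pi> l * \<alpha> l)"
  define gain where "gain = (\<lambda>i. \<alpha> i + (\<Sum>j\<in>S. W i j * (u i j i - u i j j)))"
  have bound: "\<pi> i * gain i \<le> X" if i: "i \<in> S" for i
    using stationary_gain_bound[OF fin(1) st \<pi> \<alpha> dr i] u i by (simp add: gain_def X_def)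
  have le: "\<pi> i * \<alpha> i \<le> s i * X" if i: "i \<in> S" for i
  proof -
    have "\<pi> i * \<alpha> i \<le> \<pi> i * (s i * gain i)"
      using beaten \<pi>_nonneg i by (intro mult_left_mono) (auto simp: gain_def)
    also have "\<dots> = s i * (\<pi> i * gain i)" by simp
    also have "\<dots> \<le> s i * X" using bound[OF i] s i by (intro mult_left_mono) auto
    finally show ?thesis .
  qed
  have less: "\<pi> i0 * \<alpha> i0 < s i0 * X"
  proof -
    have "\<pi> i0 * \<alpha> i0 < \<pi> i0 * (s i0 * gain i0)"
      using beaten i0 by (intro mult_strict_left_mono) (auto simp: gain_def)
    also have "\<dots> = s i0 * (\<pi> i0 * gain i0)" by simp
    also have "\<dots> \<le> s i0 * X" using bound[OF i0(1)] s i0 by (intro mult_left_mono) auto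
    finally show ?thesis .
  qed
  have "(\<Sum>i\<in>S. \<pi> i * \<alpha> i) < (\<Sum>i\<in>S. s i * X)"
    by (rule sum_strict_mono_ex1[OF fin(1)]) (use le less i0 in auto)
  then have "X < (\<Sum>i\<in>S. s i * X)" by (simp only: X_def[symmetric])
  also have "\<dots> = X" using s(2) by (simp add: sum_distrib_right[symmetric])
  finally show False by simp
qed

definition affine_fun :: "('a::real_inner \<Rightarrow> real) \<Rightarrow> bool" where
  "affine_fun g \<longleftrightarrow> (\<exists>c b. \<forall>x. g x = c \<bullet> x + b)"

lemma affine_fun_aff_eval: "affine_fun (aff_eval l)"
  unfolding affine_fun_def aff_eval_def by blast

lemma affine_fun_continuous: "affine_fun g \<Longrightarrow> continuous_on S g"
  unfolding affine_fun_def by (auto intro!: continuous_intros)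

lemma affine_fun_convex_comb:
  "affine_fun g \<Longrightarrow> u + v = 1 \<Longrightarrow> g (u *\<^sub>R x + v *\<^sub>R y) = u * g x + v * g y"
  unfolding affine_fun_def
  by (auto simp: inner_add_right algebra_simps) (metis distrib_left mult.right_neutral)

lemma affine_fun_lincomb:
  assumes "affine_fun f" "affine_fun g"
  shows "affine_fun (\<lambda>x. a * f x + b * g x + c)"
proof -
  obtain c1 b1 c2 b2 where "\<forall>x. f x = c1 \<bullet> x + b1" "\<forall>x. g x = c2 \<bullet> x + b2"
    using assms unfolding affine_fun_def by blast
  then have "a * f x + b * g x + c = (a *\<^sub>R c1 + b *\<^sub>R c2) \<bullet> x + (a * b1 + b * b2 + c)" for x
    by (auto simp: inner_add_left algebra_simps)
  then show ?thesis unfolding affine_fun_def by blast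
qed

lemma affine_fun_diff: "affine_fun f \<Longrightarrow> affine_fun g \<Longrightarrow> affine_fun (\<lambda>x. f x - g x)"
  using affine_fun_lincomb[of f g 1 "-1" 0] by simp

lemma affine_fun_sum:
  assumes "\<forall>j\<in>J. affine_fun (f j)"
  shows "affine_fun (\<lambda>x. \<Sum>j\<in>J. w j * f j x)"
proof -
  have "\<forall>j\<in>J. \<exists>cb. \<forall>x. f j x = fst cb \<bullet> x + snd cb"
    using assms unfolding affine_fun_def by auto
  then obtain cb where cb: "\<forall>j\<in>J. \<forall>x. f j x = fst (cb j) \<bullet> x + snd (cb j)" by metis
  then have "(\<Sum>j\<in>J. w j * f j x) = (\<Sum>j\<in>J. w j *\<^sub>R fst (cb j)) \<bullet> x + (\<Sum>j\<in>J. w j * snd (cb j))"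
    for x by (simp add: inner_sum_left sum.distrib[symmetric] distrib_left)
  then show ?thesis unfolding affine_fun_def by blast
qed

lemma affine_fun_sublevel:
  assumes "affine_fun g"
  shows "closed {x. g x \<le> 0}" "convex {x. g x \<le> 0}"
proof -
  obtain c b where "\<forall>x. g x = c \<bullet> x + b" using assms unfolding affine_fun_def by blast
  then have "{x. g x \<le> 0} = {x. c \<bullet> x \<le> - b}" by (auto simp: algebra_simps)
  then show "closed {x. g x \<le> 0}" "convex {x. g x \<le> 0}"
    by (simp_all add: closed_halfspace_le convex_halfspace_le)
qed

lemma affine_pair_image:
  assumes K: "compact K" "convex K" and affine: "affine_fun G" "affine_fun g"
  shows "convex ((\<lambda>p. (G p, g p)) ` K)" "compact ((\<lambda>p. (G p, g p)) ` K)"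
proof -
  show "convex ((\<lambda>p. (G p, g p)) ` K)" unfolding convex_def
  proof safe
    fix x y and u v :: real assume xy: "x \<in> K" "y \<in> K" "0 \<le> u" "0 \<le> v" "u + v = 1"
    have "u *\<^sub>R x + v *\<^sub>R y \<in> K" using K(2) xy unfolding convex_def by auto
    moreover have "u *\<^sub>R (G x, g x) + v *\<^sub>R (G y, g y) = (G (u *\<^sub>R x + v *\<^sub>R y), g (u *\<^sub>R x + v *\<^sub>R y))"
      using affine_fun_convex_comb[OF affine(1) xy(5)] affine_fun_convex_comb[OF affine(2) xy(5)]
      by simp
    ultimately show "u *\<^sub>R (G x, g x) + v *\<^sub>R (G y, g y) \<in> (\<lambda>p. (G p, g p)) ` K" by auto
  qed
  show "compact ((\<lambda>p. (G p, g p)) ` K)"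
    by (intro compact_continuous_image K continuous_on_Pair affine_fun_continuous affine)
qed

lemma separation_from_nonpositive_quadrant:
  fixes Img :: "(real \<times> real) set"
  assumes Img: "compact Img" "convex Img" "Img \<noteq> {}" and pos: "\<forall>z\<in>Img. fst z > 0 \<or> snd z > 0"
  shows "\<exists>a1 a2 b. a1 \<le> 0 \<and> a2 \<le> 0 \<and> b < 0 \<and> (\<forall>z\<in>Img. a1 * fst z + a2 * snd z < b)"
proof -
  define Quad where "Quad = {z::real \<times> real. fst z \<le> 0 \<and> snd z \<le> 0}"
  have "convex Quad" unfolding Quad_def convex_def
    by (auto intro!: add_nonpos_nonpos mult_nonneg_nonpos)
  moreover have "closed Quad" unfolding Quad_def
    by (intro closed_Collect_conj closed_Collect_le continuous_intros)
  moreover have "Img \<inter> Quad = {}" using pos by (auto simp: Quad_def)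
  ultimately obtain a b where ab: "\<forall>x\<in>Img. a \<bullet> x < b" "\<forall>x\<in>Quad. a \<bullet> x > b"
    using separating_hyperplane_compact_closed[OF Img(2,1,3)] by metis
  obtain a1 a2 where a: "a = (a1, a2)" by (cases a)
  have sep_Quad: "a1 * z1 + a2 * z2 > b" if "z1 \<le> 0" "z2 \<le> 0" for z1 z2
    using ab(2) that by (auto simp: Quad_def a)
  have b: "b < 0" using sep_Quad[of 0 0] by simp
  have "a1 \<le> 0"
  proof (rule ccontr)
    assume "\<not> a1 \<le> 0"
    then show False using sep_Quad[of "b / a1" 0] b by (simp add: divide_nonpos_pos)
  qed
  moreover have "a2 \<le> 0"
  proof (rule ccontr)
    assume "\<not> a2 \<le> 0"
    then show False using sep_Quad[of 0 "b / a2"] b by (simp add: divide_nonpos_pos)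
  qed
  moreover have "\<forall>z\<in>Img. a1 * fst z + a2 * snd z < b" using ab(1) by (auto simp: a)
  ultimately show ?thesis using b by blast
qed

text \<open>The separating line of the image of \<open>K\<close> in the plane gives the weights.\<close>

lemma two_function_alternative:
  fixes K :: "'a::real_inner set"
  assumes K: "compact K" "convex K" and affine: "affine_fun G" "affine_fun g"
    and pos: "\<forall>p\<in>K. G p > 0 \<or> g p > 0"
  shows "\<exists>\<theta>. 0 \<le> \<theta> \<and> \<theta> \<le> 1 \<and> (\<forall>p\<in>K. \<theta> * G p + (1 - \<theta>) * g p > 0)"
proof (cases "K = {}")
  case True then show ?thesis by (intro exI[of _ 0]) auto
next
  case False
  obtain a1 a2 b where a: "a1 \<le> 0" "a2 \<le> 0" and b: "b < 0"
    and sep: "\<forall>p\<in>K. a1 * G p + a2 * g p < b"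
    using separation_from_nonpositive_quadrant[of "(\<lambda>p. (G p, g p)) ` K"]
      affine_pair_image[OF K affine] False pos by auto
  obtain p0 where "p0 \<in> K" using False by auto
  then have at_p0: "a1 * G p0 + a2 * g p0 < b" using sep by blast
  have total: "- a1 - a2 > 0"
  proof (rule ccontr)
    assume "\<not> - a1 - a2 > 0"
    then have "a1 = 0" "a2 = 0" using a by auto
    then show False using at_p0 b by simp
  qed
  define \<theta> where "\<theta> = - a1 / (- a1 - a2)"
  have "\<theta> * G p + (1 - \<theta>) * g p > 0" if p: "p \<in> K" for p
  proof -
    have "1 - \<theta> = - a2 / (- a1 - a2)" using total by (simp add: \<theta>_def field_simps)
    then have "\<theta> * G p + (1 - \<theta>) * g p = (- a1) / (- a1 - a2) * G p + (- a2) / (- a1 - a2) * g p"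
      by (simp only: \<theta>_def)
    also have "\<dots> = ((- a1) * G p + (- a2) * g p) / (- a1 - a2)"
      by (metis add_divide_distrib times_divide_eq_left)
    finally have "\<theta> * G p + (1 - \<theta>) * g p = ((- a1) * G p + (- a2) * g p) / (- a1 - a2)" .
    moreover have "(- a1) * G p + (- a2) * g p > 0" using sep p b by force
    ultimately show ?thesis using total by simp
  qed
  moreover have "0 \<le> \<theta>" "\<theta> \<le> 1" using a total by (auto simp: \<theta>_def field_simps)
  ultimately show ?thesis by blast
qed

text \<open>Induction on the number of functions, each step handled by the
  two-function case on the set where the new function is nonpositive.\<close>

lemma finite_alternative:
  fixes K :: "'a::real_inner set"
  assumes "finite J" "J \<noteq> {}" "compact K" "convex K" "\<forall>j\<in>J. affine_fun (g j)"
    "\<forall>p\<in>K. \<exists>j\<in>J. g j p > 0"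
  shows "\<exists>w. (\<forall>j\<in>J. w j \<ge> 0) \<and> sum w J = 1 \<and> (\<forall>p\<in>K. (\<Sum>j\<in>J. w j * g j p) > 0)"
  using assms
proof (induction J arbitrary: K rule: finite_ne_induct)
  case (singleton j)
  then show ?case by (intro exI[of _ "\<lambda>_. 1"]) auto
next
  case (insert a J)
  note K = insert.prems(1,2) and affine = insert.prems(3) and pos = insert.prems(4)
  define K' where "K' = K \<inter> {p. g a p \<le> 0}"
  have "compact K'" "convex K'"
    using affine_fun_sublevel[of "g a"] affine K unfolding K'_def
    by (auto intro: compact_Int_closed convex_Int)
  moreover have "\<forall>p\<in>K'. \<exists>j\<in>J. g j p > 0" using pos by (force simp: K'_def)
  ultimately obtain w' where w': "\<forall>j\<in>J. w' j \<ge> 0" "sum w' J = 1"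
    "\<forall>p\<in>K'. (\<Sum>j\<in>J. w' j * g j p) > 0"
    using insert.IH[of K'] affine by blast
  define G where "G = (\<lambda>p. \<Sum>j\<in>J. w' j * g j p)"
  have "affine_fun G" unfolding G_def using affine_fun_sum affine by auto
  moreover have "\<forall>p\<in>K. G p > 0 \<or> g a p > 0" using w'(3) by (auto simp: K'_def G_def not_le)
  ultimately obtain \<theta> where \<theta>: "0 \<le> \<theta>" "\<theta> \<le> 1" "\<forall>p\<in>K. \<theta> * G p + (1 - \<theta>) * g a p > 0"
    using two_function_alternative[OF K, of G "g a"] affine by blast
  define w where "w = (\<lambda>j. if j = a then 1 - \<theta> else \<theta> * w' j)"
  have "sum w J = (\<Sum>j\<in>J. \<theta> * w' j)" using insert.hyps by (intro sum.cong) (auto simp: w_def)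
  then have "sum w (insert a J) = 1"
    using insert.hyps w'(2) by (simp add: w_def sum_distrib_left[symmetric])
  moreover have "(\<Sum>j\<in>insert a J. w j * g j p) = \<theta> * G p + (1 - \<theta>) * g a p" for p
  proof -
    have "(\<Sum>j\<in>J. w j * g j p) = (\<Sum>j\<in>J. \<theta> * (w' j * g j p))" using insert.hyps
      by (intro sum.cong) (auto simp: w_def)
    then show ?thesis using insert.hyps by (simp add: w_def G_def sum_distrib_left[symmetric])
  qed
  ultimately show ?case using \<theta> w'(1) by (intro exI[of _ w]) (auto simp: w_def)
qed

lemma inradius_rel_ge:
  assumes "(\<lambda>x. h *\<^sub>R x + t) ` B \<subseteq> C" "h \<ge> 0" "C \<noteq> {}"
  shows "ereal h \<le> inradius_rel B C"
  unfolding inradius_rel_def using assms by (auto intro!: Sup_upper)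

lemma inradius_rel_le:
  assumes "C \<noteq> {}" "\<And>h t. h \<ge> 0 \<Longrightarrow> (\<lambda>x. h *\<^sub>R x + t) ` B \<subseteq> C \<Longrightarrow> ereal h \<le> X"
  shows "inradius_rel B C \<le> X"
  unfolding inradius_rel_def using assms by (auto intro!: Sup_least)

text \<open>Nonempty sets contain a point, i.e. a homothet with \<open>h = 0\<close>.\<close>

lemma inradius_rel_nonneg:
  assumes "C \<noteq> {}" shows "0 \<le> inradius_rel B C"
proof -
  obtain t where "t \<in> C" using assms by auto
  then have "(\<lambda>x. 0 *\<^sub>R x + t) ` B \<subseteq> C" by auto
  from inradius_rel_ge[OF this _ assms] show ?thesis by (simp add: zero_ereal_def)
qed

lemma inradius_rel_mono:
  assumes "C \<noteq> {}" "C \<subseteq> D" shows "inradius_rel B C \<le> inradius_rel B D"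
  using assms by (intro inradius_rel_le inradius_rel_ge) auto

lemma shares_exceeding:
  fixes r :: "'i \<Rightarrow> ereal"
  assumes fin: "finite S" "S \<noteq> {}" and r: "\<forall>i\<in>S. 0 \<le> r i" and small: "(\<Sum>i\<in>S. r i) < ereal h"
  shows "\<exists>s. (\<forall>i\<in>S. 0 < s i \<and> r i < ereal (s i * h)) \<and> sum s S = 1"
proof -
  have "r i = ereal (real_of_ereal (r i))" if i: "i \<in> S" for i
  proof -
    have "r i \<le> (\<Sum>i\<in>S. r i)"
      using i fin r by (metis add_increasing2 sum.remove sum_nonneg Diff_iff order_refl)
    then have "r i < ereal h" using small by (rule le_less_trans)
    then show ?thesis using r i by (cases "r i") auto
  qed
  then have "(\<Sum>i\<in>S. r i) = ereal (\<Sum>i\<in>S. real_of_ereal (r i))"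
    by (simp add: sum_ereal[symmetric] cong: sum.cong)
  note real_r = \<open>\<And>i. i \<in> S \<Longrightarrow> r i = _\<close> this
  define \<rho> where "\<rho> = (\<lambda>i. real_of_ereal (r i))"
  have \<rho>: "\<forall>i\<in>S. 0 \<le> \<rho> i" using r real_r(1) unfolding \<rho>_def by (metis ereal_less_eq(5))
  have sum_\<rho>: "(\<Sum>i\<in>S. \<rho> i) < h" using small real_r(2) by (simp add: \<rho>_def)
  define N where "N = card S"
  have N: "N > 0" using fin by (simp add: N_def card_gt_0_iff)
  have "0 \<le> (\<Sum>i\<in>S. \<rho> i)" using \<rho> by (simp add: sum_nonneg)
  then have h: "h > 0" using sum_\<rho> by linarith
  define \<epsilon> where "\<epsilon> = (h - (\<Sum>i\<in>S. \<rho> i)) / N"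
  have \<epsilon>: "\<epsilon> > 0" using sum_\<rho> N by (simp add: \<epsilon>_def)
  define s where "s = (\<lambda>i. (\<rho> i + \<epsilon>) / h)"
  have "(\<Sum>i\<in>S. s i) = ((\<Sum>i\<in>S. \<rho> i) + N * \<epsilon>) / h"
    by (simp add: s_def sum_divide_distrib[symmetric] sum.distrib N_def)
  also have "N * \<epsilon> = h - (\<Sum>i\<in>S. \<rho> i)" using N by (simp add: \<epsilon>_def)
  finally have "sum s S = 1" using h by simp
  moreover have "0 < s i \<and> r i < ereal (s i * h)" if i: "i \<in> S" for i
  proof -
    have "r i = ereal (\<rho> i)" unfolding \<rho>_def by (rule real_r(1)[OF i])
    moreover have "\<rho> i + \<epsilon> > 0" using i \<rho> \<epsilon> by (simp add: add_nonneg_pos)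
    ultimately show ?thesis using h \<epsilon> by (simp add: s_def)
  qed
  ultimately show ?thesis by blast
qed

lemma shrunk_copy_in_cell:
  assumes K: "K = (\<lambda>x. h *\<^sub>R x + t) ` B" "convex K"
    and affine: "\<forall>j\<in>S. affine_fun (lam j)" and i: "i \<in> S"
    and M: "\<forall>j\<in>S. \<forall>x\<in>K. lam i x - lam j x \<le> M j"
    and \<sigma>: "0 \<le> \<sigma>" "\<sigma> \<le> 1" and p: "p \<in> K"
    and nonpos: "\<forall>j\<in>S. \<sigma> * M j + (1 - \<sigma>) * (lam i p - lam j p) \<le> 0"
  shows "(\<lambda>x. (\<sigma> * h) *\<^sub>R x + (\<sigma> *\<^sub>R t + (1 - \<sigma>) *\<^sub>R p)) ` B
    \<subseteq> {x\<in>K. \<forall>j\<in>S. lam i x \<le> lam j x}"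
proof safe
  fix x assume x: "x \<in> B"
  define k where "k = h *\<^sub>R x + t"
  have k: "k \<in> K" using x unfolding K(1) k_def by (rule imageI)
  have z: "(\<sigma> * h) *\<^sub>R x + (\<sigma> *\<^sub>R t + (1 - \<sigma>) *\<^sub>R p) = \<sigma> *\<^sub>R k + (1 - \<sigma>) *\<^sub>R p"
    by (simp add: k_def scaleR_add_right)
  show "(\<sigma> * h) *\<^sub>R x + (\<sigma> *\<^sub>R t + (1 - \<sigma>) *\<^sub>R p) \<in> K"
    unfolding z using convexD[OF K(2) k p] \<sigma> by simp
  fix j assume j: "j \<in> S"
  have comb: "lam l (\<sigma> *\<^sub>R k + (1 - \<sigma>) *\<^sub>R p) = \<sigma> * lam l k + (1 - \<sigma>) * lam l p"
    if "l \<in> S" for l using affine that by (intro affine_fun_convex_comb) auto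
  have "\<sigma> * (lam i k - lam j k) \<le> \<sigma> * M j" using M j k \<sigma> by (intro mult_left_mono) auto
  moreover have "\<sigma> * M j + (1 - \<sigma>) * (lam i p - lam j p) \<le> 0" using nonpos j by blast
  ultimately show "lam i ((\<sigma> * h) *\<^sub>R x + (\<sigma> *\<^sub>R t + (1 - \<sigma>) *\<^sub>R p))
      \<le> lam j ((\<sigma> * h) *\<^sub>R x + (\<sigma> *\<^sub>R t + (1 - \<sigma>) *\<^sub>R p))"
    unfolding z comb[OF i] comb[OF j] by (simp add: algebra_simps)
qed

lemma small_cell_forces_gap:
  assumes K: "K = (\<lambda>x. h *\<^sub>R x + t) ` B" "convex K"
    and affine: "\<forall>j\<in>S. affine_fun (lam j)" and i: "i \<in> S"
    and M: "\<forall>j\<in>S. \<forall>x\<in>K. lam i x - lam j x \<le> M j"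
    and \<sigma>: "0 \<le> \<sigma>" "\<sigma> \<le> 1" and p: "p \<in> K"
    and cell: "{x\<in>K. \<forall>j\<in>S. lam i x \<le> lam j x} \<noteq> {}"
    and small: "inradius_rel B {x\<in>K. \<forall>j\<in>S. lam i x \<le> lam j x} < ereal (\<sigma> * h)"
  shows "\<exists>j\<in>S. \<sigma> * M j + (1 - \<sigma>) * (lam i p - lam j p) > 0"
proof (rule ccontr)
  assume "\<not> (\<exists>j\<in>S. \<sigma> * M j + (1 - \<sigma>) * (lam i p - lam j p) > 0)"
  then have "\<forall>j\<in>S. \<sigma> * M j + (1 - \<sigma>) * (lam i p - lam j p) \<le> 0" by (simp add: not_less)
  then have copy: "(\<lambda>x. (\<sigma> * h) *\<^sub>R x + (\<sigma> *\<^sub>R t + (1 - \<sigma>) *\<^sub>R p)) ` B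
      \<subseteq> {x\<in>K. \<forall>j\<in>S. lam i x \<le> lam j x}"
    using shrunk_copy_in_cell[OF K affine i M \<sigma> p] by blast
  have "0 < ereal (\<sigma> * h)" using inradius_rel_nonneg[OF cell] small by (rule le_less_trans)
  then have "ereal (\<sigma> * h) \<le> inradius_rel B {x\<in>K. \<forall>j\<in>S. lam i x \<le> lam j x}"
    using inradius_rel_ge[OF copy _ cell] by simp
  then show False using small by (meson leD)
qed

lemma minimizers_exist:
  fixes F :: "'i \<Rightarrow> 'a::topological_space \<Rightarrow> real"
  assumes "compact K" "K \<noteq> {}" "\<forall>i\<in>I. continuous_on K (F i)"
  shows "\<exists>q. \<forall>i\<in>I. q i \<in> K \<and> (\<forall>x\<in>K. F i (q i) \<le> F i x)"
proof -
  have "\<forall>i\<in>I. \<exists>p. p \<in> K \<and> (\<forall>x\<in>K. F i p \<le> F i x)"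
    using continuous_attains_inf[OF assms(1,2)] assms(3) by blast
  then show ?thesis by (rule bchoice)
qed

lemma homothet_compact_convex:
  fixes B :: "'a::real_normed_vector set"
  assumes "compact B" "convex B"
  shows "compact ((\<lambda>x. h *\<^sub>R x + t) ` B)" "convex ((\<lambda>x. h *\<^sub>R x + t) ` B)"
proof -
  show "compact ((\<lambda>x. h *\<^sub>R x + t) ` B)"
    by (rule compact_continuous_image[OF _ assms(1)]) (auto intro!: continuous_intros)
  show "convex ((\<lambda>x. h *\<^sub>R x + t) ` B)"
    using convex_affinity[OF assms(2), of t h] by (simp add: add.commute)
qed

lemma difference_maximizers:
  assumes K: "compact K" "K \<noteq> {}" and affine: "\<forall>j\<in>S. affine_fun (lam j)"
  shows "\<exists>y. \<forall>i\<in>S. \<forall>j\<in>S. y i j \<in> K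
    \<and> (\<forall>x\<in>K. lam i x - lam j x \<le> lam i (y i j) - lam j (y i j))"
proof -
  define F where "F = (\<lambda>ij x. - (lam (fst ij) x - lam (snd ij) x))"
  have "\<forall>ij\<in>S \<times> S. continuous_on K (F ij)"
    unfolding F_def using affine by (auto intro!: affine_fun_continuous affine_fun_diff)
  then obtain q where q: "\<forall>ij\<in>S \<times> S. q ij \<in> K \<and> (\<forall>x\<in>K. F ij (q ij) \<le> F ij x)"
    using minimizers_exist[OF K, of "S \<times> S" F] by blast
  have "q (i, j) \<in> K \<and> (\<forall>x\<in>K. lam i x - lam j x \<le> lam i (q (i, j)) - lam j (q (i, j)))"
    if "i \<in> S" "j \<in> S" for i j
  proof -
    have "(i, j) \<in> S \<times> S" using that by simp
    then have "q (i, j) \<in> K" and min: "\<forall>x\<in>K. F (i, j) (q (i, j)) \<le> F (i, j) x"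
      using q by blast+
    moreover have "lam i x - lam j x \<le> lam i (q (i, j)) - lam j (q (i, j))" if "x \<in> K" for x
      using min that by (fastforce simp: F_def)
    ultimately show ?thesis by blast
  qed
  then show ?thesis by (intro exI[of _ "\<lambda>i j. q (i, j)"]) blast
qed

lemma stochastic_alternative:
  assumes fin: "finite S" "S \<noteq> {}" and K: "compact K" "convex K"
    and affine: "\<And>i j. i \<in> S \<Longrightarrow> j \<in> S \<Longrightarrow> affine_fun (g i j)"
    and gap: "\<And>i p. i \<in> S \<Longrightarrow> p \<in> K \<Longrightarrow> \<exists>j\<in>S. g i j p > 0"
  shows "\<exists>W. stochastic_on S W \<and> (\<forall>i\<in>S. \<forall>p\<in>K. 0 < (\<Sum>j\<in>S. W i j * g i j p))"
proof -
  have "\<forall>i\<in>S. \<exists>w. (\<forall>j\<in>S. w j \<ge> 0) \<and> sum w S = 1 \<and> (\<forall>p\<in>K. (\<Sum>j\<in>S. w j * g i j p) > 0)"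
  proof
    fix i assume i: "i \<in> S"
    show "\<exists>w. (\<forall>j\<in>S. w j \<ge> 0) \<and> sum w S = 1 \<and> (\<forall>p\<in>K. (\<Sum>j\<in>S. w j * g i j p) > 0)"
      using finite_alternative[OF fin K, of "g i"] affine[OF i] gap[OF i] by blast
  qed
  from bchoice[OF this] obtain W where "\<forall>i\<in>S. (\<forall>j\<in>S. W i j \<ge> 0) \<and> sum (W i) S = 1
      \<and> (\<forall>p\<in>K. (\<Sum>j\<in>S. W i j * g i j p) > 0)"
    by blast
  then show ?thesis by (intro exI[of _ W]) (simp add: stochastic_on_def)
qed

lemma minimal_gap_drift:
  assumes st: "stochastic_on S W" and cells: "\<forall>i\<in>S. \<exists>x\<in>K. \<forall>j\<in>S. lam i x \<le> lam j x"
    and pmin: "\<forall>i\<in>S. pmin i \<in> K \<and> (\<forall>x\<in>K. (\<Sum>j\<in>S. W i j * (lam i (pmin i) - lam j (pmin i)))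
      \<le> (\<Sum>j\<in>S. W i j * (lam i x - lam j x)))"
  defines "\<alpha> \<equiv> \<lambda>i. - (\<Sum>j\<in>S. W i j * (lam i (pmin i) - lam j (pmin i)))"
  shows "drift_bounded S W \<alpha> ((\<lambda>x j. lam j x) ` K)" "\<forall>l\<in>S. \<alpha> l \<ge> 0"
proof -
  have drift: "(\<Sum>j\<in>S. W l j * (lam j x - lam l x)) = - (\<Sum>j\<in>S. W l j * (lam l x - lam j x))"
    for l x by (simp add: sum_negf[symmetric] algebra_simps)
  show "drift_bounded S W \<alpha> ((\<lambda>x j. lam j x) ` K)"
    using pmin by (auto simp: drift_bounded_def drift \<alpha>_def)
  show "\<forall>l\<in>S. \<alpha> l \<ge> 0"
  proof
    fix l assume l: "l \<in> S"
    then obtain x where x: "x \<in> K" "\<forall>j\<in>S. lam l x \<le> lam j x" using cells by blast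
    have "(\<Sum>j\<in>S. W l j * (lam l x - lam j x)) \<le> 0"
      using x st l by (auto simp: stochastic_on_def intro!: sum_nonpos mult_nonneg_nonpos)
    then show "\<alpha> l \<ge> 0" using pmin l x unfolding \<alpha>_def by force
  qed
qed

text \<open>The values of the \<open>\<lambda>\<^sub>j\<close> at points of \<open>K\<close> serve as
  potentials with drift bounded by \<open>\<alpha> i = - min\<^sub>K \<Sum>\<^sub>j W i j (\<lambda>\<^sub>i - \<lambda>\<^sub>j)\<close>.\<close>

lemma no_positive_weighted_gaps:
  fixes lam :: "'i \<Rightarrow> 'a::real_inner \<Rightarrow> real"
  assumes K: "compact K" "K \<noteq> {}" and fin: "finite S" "S \<noteq> {}"
    and affine: "\<forall>j\<in>S. affine_fun (lam j)"
    and cells: "\<forall>i\<in>S. \<exists>x\<in>K. \<forall>j\<in>S. lam i x \<le> lam j x"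
    and st: "stochastic_on S W" and s: "\<forall>i\<in>S. s i \<ge> 0" "sum s S = 1"
    and y: "\<forall>i\<in>S. \<forall>j\<in>S. y i j \<in> K"
    and pos: "\<forall>i\<in>S. \<forall>p\<in>K. 0 < (\<Sum>j\<in>S. W i j *
      (s i * (lam i (y i j) - lam j (y i j)) + (1 - s i) * (lam i p - lam j p)))"
  shows False
proof -
  define F where "F = (\<lambda>i x. \<Sum>j\<in>S. W i j * (lam i x - lam j x))"
  have "\<forall>i\<in>S. continuous_on K (F i)"
    unfolding F_def using affine
    by (intro ballI affine_fun_continuous affine_fun_sum) (auto intro: affine_fun_diff)
  then obtain pmin where pmin: "\<forall>i\<in>S. pmin i \<in> K \<and> (\<forall>x\<in>K. F i (pmin i) \<le> F i x)"
    using minimizers_exist[OF K] by blast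
  define \<alpha> where "\<alpha> = (\<lambda>i. - F i (pmin i))"
  define V where "V = (\<lambda>x j. lam j x) ` K"
  have "drift_bounded S W \<alpha> V" "\<forall>l\<in>S. \<alpha> l \<ge> 0"
    using minimal_gap_drift[OF st cells, of pmin] pmin unfolding F_def \<alpha>_def V_def by blast+
  moreover have "\<forall>i\<in>S. \<forall>j\<in>S. (\<lambda>l. lam l (y i j)) \<in> V" using y by (auto simp: V_def)
  moreover have "\<alpha> i < s i * (\<alpha> i + (\<Sum>j\<in>S. W i j * (lam i (y i j) - lam j (y i j))))"
    if i: "i \<in> S" for i
  proof -
    have "0 < (\<Sum>j\<in>S. W i j * (s i * (lam i (y i j) - lam j (y i j))
        + (1 - s i) * (lam i (pmin i) - lam j (pmin i))))"
      using pos pmin i by blast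
    also have "\<dots> = (\<Sum>j\<in>S. s i * (W i j * (lam i (y i j) - lam j (y i j)))
        + (1 - s i) * (W i j * (lam i (pmin i) - lam j (pmin i))))"
      by (rule sum.cong) (simp_all add: algebra_simps)
    also have "\<dots> = s i * (\<Sum>j\<in>S. W i j * (lam i (y i j) - lam j (y i j))) + (1 - s i) * F i (pmin i)"
      by (simp only: F_def sum.distrib sum_distrib_left)
    finally show ?thesis by (simp add: \<alpha>_def algebra_simps)
  qed
  ultimately show False
    using no_shares_beaten_by_gains[OF fin st, of \<alpha> V s "\<lambda>i j l. lam l (y i j)"] s by blast
qed

text \<open>Otherwise some shares \<open>s i\<close> with
  \<open>\<Sum> s = 1\<close> exceed the inradii; the shrunken copy \<open>s\<^sub>i K + (1 - s\<^sub>i) p\<close> never fits into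
  cell \<open>i\<close>, and the theorem of the alternative turns this into weights contradicting
  the previous lemma.\<close>

lemma cells_of_homothet:
  fixes B K :: "'a::euclidean_space set" and h :: real and t :: 'a
    and S :: "'i set" and lam :: "'i \<Rightarrow> 'a \<Rightarrow> real"
  defines "cell \<equiv> \<lambda>i. {x\<in>K. \<forall>j\<in>S. lam i x \<le> lam j x}"
  assumes K_def: "K = (\<lambda>x. h *\<^sub>R x + t) ` B"
    and B: "compact B" "convex B" and fin: "finite S" "S \<noteq> {}"
    and affine: "\<forall>j\<in>S. affine_fun (lam j)" and cells: "\<forall>i\<in>S. cell i \<noteq> {}"
  shows "ereal h \<le> (\<Sum>i\<in>S. inradius_rel B (cell i))"
proof (rule ccontr)
  assume "\<not> ereal h \<le> (\<Sum>i\<in>S. inradius_rel B (cell i))"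
  moreover have "\<forall>i\<in>S. 0 \<le> inradius_rel B (cell i)" using cells inradius_rel_nonneg by blast
  ultimately obtain s where s: "\<forall>i\<in>S. 0 < s i \<and> inradius_rel B (cell i) < ereal (s i * h)"
    and sum_s: "sum s S = 1"
    using shares_exceeding[OF fin] by (metis not_le)
  have s_le_1: "s i \<le> 1" if "i \<in> S" for i
  proof -
    have "s i \<le> sum s S" using that fin s by (intro member_le_sum) (auto intro: less_imp_le)
    then show ?thesis using sum_s by simp
  qed
  have K: "compact K" "convex K" "K \<noteq> {}"
    using homothet_compact_convex[OF B] cells fin by (auto simp: K_def cell_def)
  obtain y where y: "\<forall>i\<in>S. \<forall>j\<in>S. y i j \<in> K
      \<and> (\<forall>x\<in>K. lam i x - lam j x \<le> lam i (y i j) - lam j (y i j))"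
    using difference_maximizers[OF K(1,3) affine] by blast
  define g where "g = (\<lambda>i j p. s i * (lam i (y i j) - lam j (y i j)) + (1 - s i) * (lam i p - lam j p))"
  have gap: "\<exists>j\<in>S. g i j p > 0" if i: "i \<in> S" and p: "p \<in> K" for i p
  proof -
    have "\<forall>j\<in>S. \<forall>x\<in>K. lam i x - lam j x \<le> lam i (y i j) - lam j (y i j)" using y i by blast
    moreover have "0 \<le> s i" "s i \<le> 1" using s s_le_1 i by (auto simp: less_imp_le)
    moreover have "{x\<in>K. \<forall>j\<in>S. lam i x \<le> lam j x} \<noteq> {}" using cells i by (simp add: cell_def)
    moreover have "inradius_rel B {x\<in>K. \<forall>j\<in>S. lam i x \<le> lam j x} < ereal (s i * h)"
      using s i by (simp add: cell_def)
    ultimately show ?thesis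
      using small_cell_forces_gap[OF K_def K(2) affine i, where M = "\<lambda>j. lam i (y i j) - lam j (y i j)"
          and \<sigma> = "s i" and p = p] p
      unfolding g_def by blast
  qed
  have "affine_fun (g i j)" if "i \<in> S" "j \<in> S" for i j
  proof -
    have "g i j = (\<lambda>p. (1 - s i) * lam i p + (- (1 - s i)) * lam j p
        + s i * (lam i (y i j) - lam j (y i j)))"
      by (auto simp: g_def algebra_simps)
    then show ?thesis using affine_fun_lincomb[of "lam i" "lam j"] affine that by simp
  qed
  then obtain W where "stochastic_on S W" and W: "\<forall>i\<in>S. \<forall>p\<in>K. 0 < (\<Sum>j\<in>S. W i j * g i j p)"
    using stochastic_alternative[OF fin K(1,2), of g] gap by blast
  moreover have "\<forall>i\<in>S. \<exists>x\<in>K. \<forall>j\<in>S. lam i x \<le> lam j x" using cells by (auto simp: cell_def)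
  moreover have "\<forall>i\<in>S. s i \<ge> 0" using s by (simp add: less_imp_le)
  moreover have "\<forall>i\<in>S. \<forall>j\<in>S. y i j \<in> K" using y by blast
  moreover have "\<forall>i\<in>S. \<forall>p\<in>K. 0 < (\<Sum>j\<in>S. W i j *
      (s i * (lam i (y i j) - lam j (y i j)) + (1 - s i) * (lam i p - lam j p)))"
    using W unfolding g_def by blast
  ultimately show False using no_positive_weighted_gaps[OF K(1,3) fin affine _ _ _ sum_s] by blast
qed

lemma affine_partition_parts_subset: "D \<in> set (affine_partition C ls) \<Longrightarrow> D \<subseteq> C"
  by (auto simp: affine_partition_def)

lemma affine_partition_nonempty: "ls \<noteq> [] \<Longrightarrow> affine_partition C ls \<noteq> []"
  by (simp add: affine_partition_def)

lemma exists_argmin_below: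
  fixes f :: "nat \<Rightarrow> 'b::linorder"
  assumes "0 < n"
  shows "\<exists>m<n. \<forall>j<n. f m \<le> f j"
proof -
  let ?m = "arg_min_on f {..<n}"
  have "{..<n} \<noteq> {}" using assms by auto
  then have "?m < n" "\<not> (\<exists>j\<in>{..<n}. f j < f ?m)"
    using arg_min_if_finite[of "{..<n}" f] by auto
  then show ?thesis by (auto simp: not_less)
qed

lemma active_minimal_is_minimal:
  fixes lam :: "nat \<Rightarrow> 'a \<Rightarrow> 'b::linorder"
  assumes n: "0 < n" and x: "x \<in> K"
    and min: "\<forall>j\<in>{i. i < n \<and> (\<exists>x\<in>K. \<forall>j<n. lam i x \<le> lam j x)}. lam i x \<le> lam j x"
  shows "\<forall>j<n. lam i x \<le> lam j x"
proof -
  obtain m where m: "m < n" "\<forall>j<n. lam m x \<le> lam j x"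
    using exists_argmin_below[OF n, of "\<lambda>j. lam j x"] by blast
  then have "m \<in> {i. i < n \<and> (\<exists>x\<in>K. \<forall>j<n. lam i x \<le> lam j x)}" using x by blast
  with min have "lam i x \<le> lam m x" by (rule bspec)
  then show ?thesis using m(2) order_trans by blast
qed

text \<open>Only the affine functions that are minimal somewhere on the homothet matter:
  the homothet's cells for these active functions lie inside the corresponding parts of
  \<open>C\<close>, and the remaining parts contribute nonnegative terms.\<close>

lemma affine_partition_sum_ge_homothet:
  fixes B :: "'a::euclidean_space set"
  assumes B: "compact B" "convex B" "B \<noteq> {}"
    and sub: "(\<lambda>x. h *\<^sub>R x + t) ` B \<subseteq> C" and ls: "ls \<noteq> []"
    and parts: "\<forall>D\<in>set (affine_partition C ls). D \<noteq> {}"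
  shows "ereal h \<le> (\<Sum>D\<leftarrow>affine_partition C ls. inradius_rel B D)"
proof -
  define n where "n = length ls"
  define lam where "lam = (\<lambda>j. aff_eval (ls ! j))"
  define part where "part = (\<lambda>i. C \<inter> {x. \<forall>j<n. j \<noteq> i \<longrightarrow> lam i x \<le> lam j x})"
  have partition: "affine_partition C ls = map part [0..<n]"
    by (simp add: affine_partition_def part_def n_def lam_def)
  have part_ne: "part i \<noteq> {}" if "i < n" for i using parts that by (auto simp: partition)
  define K where "K = (\<lambda>x. h *\<^sub>R x + t) ` B"
  have "0 < n" using ls by (simp add: n_def)
  define S where "S = {i. i < n \<and> (\<exists>x\<in>K. \<forall>j<n. lam i x \<le> lam j x)}"
  define cell where "cell = (\<lambda>i. {x\<in>K. \<forall>j\<in>S. lam i x \<le> lam j x})"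
  have S: "finite S" "S \<subseteq> {0..<n}" by (auto simp: S_def)
  have "S \<noteq> {}"
  proof -
    obtain x where x: "x \<in> K" using B by (auto simp: K_def)
    obtain m where "m < n" "\<forall>j<n. lam m x \<le> lam j x"
      using exists_argmin_below[OF \<open>0 < n\<close>, of "\<lambda>j. lam j x"] by blast
    then show ?thesis using x by (auto simp: S_def)
  qed
  moreover have "\<forall>j\<in>S. affine_fun (lam j)" by (simp add: lam_def affine_fun_aff_eval)
  moreover have cell_ne: "\<forall>i\<in>S. cell i \<noteq> {}" by (auto simp: S_def cell_def)
  ultimately have "ereal h \<le> (\<Sum>i\<in>S. inradius_rel B (cell i))"
    using cells_of_homothet[OF K_def B(1,2) S(1)] unfolding cell_def by blast
  also have "\<dots> \<le> (\<Sum>i\<in>S. inradius_rel B (part i))"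
  proof (rule sum_mono, rule inradius_rel_mono)
    fix i assume "i \<in> S"
    then show "cell i \<noteq> {}" using cell_ne by blast
    show "cell i \<subseteq> part i"
    proof
      fix x assume "x \<in> cell i"
      then have x: "x \<in> K" and "\<forall>j\<in>S. lam i x \<le> lam j x" by (auto simp: cell_def)
      then have "\<forall>j<n. lam i x \<le> lam j x"
        using active_minimal_is_minimal[OF \<open>0 < n\<close> x, of lam i] unfolding S_def by blast
      then show "x \<in> part i" using x sub by (auto simp: part_def K_def)
    qed
  qed
  also have "\<dots> \<le> (\<Sum>i\<in>{0..<n}. inradius_rel B (part i))"
    using S(2) part_ne by (intro sum_mono2 inradius_rel_nonneg) auto
  also have "\<dots> = (\<Sum>D\<leftarrow>affine_partition C ls. inradius_rel B D)"
    by (simp add: partition interv_sum_list_conv_sum_set_nat comp_def)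
  finally show ?thesis .
qed

lemma inradius_le_affine_partition:
  fixes B :: "'a::euclidean_space set"
  assumes B: "compact B" "convex B" "B \<noteq> {}" and ls: "ls \<noteq> []"
    and parts: "\<forall>D\<in>set (affine_partition C ls). D \<noteq> {}"
  shows "inradius_rel B C \<le> (\<Sum>D\<leftarrow>affine_partition C ls. inradius_rel B D)"
proof (rule inradius_rel_le)
  obtain D where "D \<in> set (affine_partition C ls)"
    using affine_partition_nonempty[OF ls] by (meson last_in_set)
  then show "C \<noteq> {}" using parts affine_partition_parts_subset by blast
  fix h t assume "h \<ge> 0" "(\<lambda>x. h *\<^sub>R x + t) ` B \<subseteq> C"
  then show "ereal h \<le> (\<Sum>D\<leftarrow>affine_partition C ls. inradius_rel B D)"
    using affine_partition_sum_ge_homothet[OF B _ ls parts] by blast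
qed

lemma sum_inradius_refine:
  fixes B :: "'a::euclidean_space set"
  assumes B: "compact B" "convex B" "B \<noteq> {}" and i: "i < length P" and ls: "ls \<noteq> []"
    and parts: "\<forall>D\<in>set (affine_partition (P ! i) ls). D \<noteq> {}"
  shows "(\<Sum>C\<leftarrow>P. inradius_rel B C)
    \<le> (\<Sum>C\<leftarrow>take i P @ affine_partition (P ! i) ls @ drop (Suc i) P. inradius_rel B C)"
proof -
  have P: "P = take i P @ P ! i # drop (Suc i) P" using id_take_nth_drop[OF i] .
  have "(\<Sum>C\<leftarrow>P. inradius_rel B C) = (\<Sum>C\<leftarrow>take i P. inradius_rel B C) + inradius_rel B (P ! i)
      + (\<Sum>C\<leftarrow>drop (Suc i) P. inradius_rel B C)"
    by (subst P) (simp add: add.assoc)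
  also have "\<dots> \<le> (\<Sum>C\<leftarrow>take i P. inradius_rel B C) + (\<Sum>C\<leftarrow>affine_partition (P ! i) ls. inradius_rel B C)
      + (\<Sum>C\<leftarrow>drop (Suc i) P. inradius_rel B C)"
    using inradius_le_affine_partition[OF B ls parts] by (intro add_mono) auto
  finally show ?thesis by (simp add: add.assoc)
qed

lemma refine_parts_nonempty:
  assumes i: "i < length P" and ls: "ls \<noteq> []"
    and parts: "\<forall>C\<in>set (take i P @ affine_partition (P ! i) ls @ drop (Suc i) P). C \<noteq> {}"
  shows "\<forall>C\<in>set P. C \<noteq> {}"
proof -
  obtain D where "D \<in> set (affine_partition (P ! i) ls)"
    using affine_partition_nonempty[OF ls] by (meson last_in_set)
  then have "P ! i \<noteq> {}" using parts affine_partition_parts_subset by fastforce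
  moreover have "set P = set (take i P @ P ! i # drop (Suc i) P)"
    using id_take_nth_drop[OF i] by simp
  ultimately show ?thesis using parts by auto
qed

theorem mainTheorem6:
  fixes B :: "'a::euclidean_space set" and P :: "'a set list"
  assumes "convex_body B"
    and "hier_affine_partition B P"
    and "\<forall>C\<in>set P. C \<noteq> {}"
  shows "(\<Sum>C\<leftarrow>P. inradius_rel B C) \<ge> 1"
proof -
  have B: "compact B" "convex B" "B \<noteq> {}"
    using assms(1) interior_subset[of B] unfolding convex_body_def by auto
  have "(\<forall>C\<in>set P. C \<noteq> {}) \<longrightarrow> 1 \<le> (\<Sum>C\<leftarrow>P. inradius_rel B C)"
    using assms(2)
  proof (induction rule: hier_affine_partition.induct)
    case (base ls)
    have "1 \<le> inradius_rel B B"
      using inradius_rel_ge[of 1 0 B B] B by (simp add: one_ereal_def)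
    then show ?case using inradius_le_affine_partition[OF B base] by (auto intro: order_trans)
  next
    case (refine P i ls)
    let ?P' = "take i P @ affine_partition (P ! i) ls @ drop (Suc i) P"
    show ?case
    proof
      assume parts: "\<forall>C\<in>set ?P'. C \<noteq> {}"
      then have "1 \<le> (\<Sum>C\<leftarrow>P. inradius_rel B C)"
        using refine.IH refine_parts_nonempty[OF refine.hyps(2,3)] by blast
      also have "\<dots> \<le> (\<Sum>C\<leftarrow>?P'. inradius_rel B C)"
        using parts by (intro sum_inradius_refine[OF B refine.hyps(2,3)]) auto
      finally show "1 \<le> (\<Sum>C\<leftarrow>?P'. inradius_rel B C)" .
    qed
  qed
  then show ?thesis using assms(3) by simp
qed

end
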